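(* Let $X_1, X_2, \ldots$ be independent random variables, each uniformly distributed on $[-1,1]$, and fix $\varepsilon > 0$. For $t \ge 0$ and $z \in \mathbb{R}$, let $f_t(z) = 1$ if there exists $S \subseteq \{1,\dots,t\}$ with $\lvert z - \sum_{i \in S} X_i \rvert < \varepsilon$, and $f_t(z) = 0$ otherwise; let $v_t = \frac{1}{2}\int_{-1}^{1} f_t(z)\,\mathrm{d}z$, let $\tau_1 = \min\{t \ge 0 : v_t > 1/2\}$, and for $t \ge 0$ let $w_t = 1 - v_{\tau_1 + t}$. Then for all $t \ge 0$, $$\mathbb{E}\left[w_{t+1} \,\middle|\, X_1,\dots,X_{\tau_1+t}\right] \le w_t\left[1 - \tfrac{1}{4}(1 - w_t)\right].$$
   Context: $f_t$ is the indicator that $z$ can be approximated to within error strictly less than $\varepsilon$ by a subset sum of the first $t$ variables (the empty sum being $0$); $v_t$ is the fraction of $[-1,1]$ so approximated; $\tau_1$ is the first time this fraction exceeds $1/2$ (it is a stopping time, taken to be finite); $w_t$ is the fraction of $[-1,1]$ not approximated, $t$ steps after time $\tau_1$. *)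

theory Defs
  imports "HOL-Probability.Probability"
begin

text \<open>The random variables are X 1, X 2, ... (the value X 0 is ignored).
  Subset sums range over finite S of indices i with 1 \<le> i and i \<le> k,
  where k is an extended natural (k = \<infinity> is only used on the null event
  where tau1 would be infinite).\<close>

definition fapp :: "(nat \<Rightarrow> 'a \<Rightarrow> real) \<Rightarrow> real \<Rightarrow> enat \<Rightarrow> 'a \<Rightarrow> real \<Rightarrow> real" where
  "fapp X \<epsilon> k \<omega> z =
     (if \<exists>S. finite S \<and> S \<subseteq> {i. 1 \<le> i \<and> enat i \<le> k} \<and> \<bar>z - (\<Sum>i\<in>S. X i \<omega>)\<bar> < \<epsilon>
      then 1 else 0)"

definition vfrac :: "(nat \<Rightarrow> 'a \<Rightarrow> real) \<Rightarrow> real \<Rightarrow> enat \<Rightarrow> 'a \<Rightarrow> real" where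
  "vfrac X \<epsilon> k \<omega> = (1/2) * (LINT z:{-1..1}|lborel. fapp X \<epsilon> k \<omega> z)"

definition tau1 :: "(nat \<Rightarrow> 'a \<Rightarrow> real) \<Rightarrow> real \<Rightarrow> 'a \<Rightarrow> enat" where
  "tau1 X \<epsilon> \<omega> =
     (if \<exists>t. vfrac X \<epsilon> (enat t) \<omega> > 1/2
      then enat (LEAST t. vfrac X \<epsilon> (enat t) \<omega> > 1/2) else \<infinity>)"

definition wfrac :: "(nat \<Rightarrow> 'a \<Rightarrow> real) \<Rightarrow> real \<Rightarrow> nat \<Rightarrow> 'a \<Rightarrow> real" where
  "wfrac X \<epsilon> t \<omega> = 1 - vfrac X \<epsilon> (tau1 X \<epsilon> \<omega> + enat t) \<omega>"

definition natfilt :: "'a measure \<Rightarrow> (nat \<Rightarrow> 'a \<Rightarrow> real) \<Rightarrow> enat \<Rightarrow> 'a measure" where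
  "natfilt M X k = sigma (space M)
     {X i -` B \<inter> space M | i B. 1 \<le> i \<and> enat i \<le> k \<and> B \<in> sets borel}"

end

(*
  Let g_k = 1 - f_k be the indicator of the points of [-1,1] not yet approximated after k steps.
  A subset sum of X_1, ..., X_(k+1) either omits X_(k+1) or uses it, so
  g_(k+1)(z) = g_k(z) g_k(z - X_(k+1)); as X_(k+1) is uniform on [-1,1] and independent of
  X_1, ..., X_k, the conditional expectation of the uncovered fraction w_(k+1) is one quarter of
  the overlap integral of g_k over [-1,1]^2.  With c = 2 w_k the mass of g_k, the shifted
  window integral of g_k at z is at most c + |z|, and the first moment of g_k is at most
  min c (c/2 + 1/4) because g_k <= 1, so the overlap is at most 3c/2 + c^2/4 once c <= 1,
  which holds from time tau_1 on.  Since g_k vanishes on (-eps, eps), the window integral is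
  also at most 2 - min eps 1; thus E w_k decays geometrically and tau_1 is finite almost surely.
  The bound at the stopping time tau_1 + t follows by splitting along the events
  {tau_1 + t = n}, on each of which the conditional expectation given the pre-tau sigma-algebra
  agrees with the one given X_1, ..., X_n.
*)

theory Submission
  imports Defs
begin

section \<open>Approximation by subset sums\<close>

lemma ex_finite_subset_insert_iff:
  assumes "a \<notin> K"
  shows "(\<exists>S. finite S \<and> S \<subseteq> insert a K \<and> P S) \<longleftrightarrow>
         (\<exists>S. finite S \<and> S \<subseteq> K \<and> (P S \<or> P (insert a S)))"
proof
  assume "\<exists>S. finite S \<and> S \<subseteq> insert a K \<and> P S"
  then obtain S where S: "finite S" "S \<subseteq> insert a K" "P S" by blast
  then have "P (S - {a}) \<or> P (insert a (S - {a}))"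
    by (cases "a \<in> S") (simp_all add: insert_absorb)
  with S show "\<exists>S. finite S \<and> S \<subseteq> K \<and> (P S \<or> P (insert a S))"
    by (intro exI[of _ "S - {a}"]) auto
qed blast

lemma fapp_Suc:
  "1 - fapp X \<epsilon> (enat (Suc k)) \<omega> z =
     (1 - fapp X \<epsilon> (enat k) \<omega> z) * (1 - fapp X \<epsilon> (enat k) \<omega> (z - X (Suc k) \<omega>))"
proof -
  let ?K = "{i. 1 \<le> i \<and> enat i \<le> enat k}"
  define near where "near y S \<longleftrightarrow> \<bar>y - (\<Sum>i\<in>S. X i \<omega>)\<bar> < \<epsilon>" for y S
  have notin: "Suc k \<notin> ?K" by simp
  have K: "{i. 1 \<le> i \<and> enat i \<le> enat (Suc k)} = insert (Suc k) ?K" by auto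
  have "near z (insert (Suc k) S) \<longleftrightarrow> near (z - X (Suc k) \<omega>) S" if "finite S" "S \<subseteq> ?K" for S
    using that notin by (auto simp: near_def sum.insert_if algebra_simps)
  then have iff: "(\<exists>S. finite S \<and> S \<subseteq> insert (Suc k) ?K \<and> near z S) \<longleftrightarrow>
      (\<exists>S. finite S \<and> S \<subseteq> ?K \<and> near z S) \<or> (\<exists>S. finite S \<and> S \<subseteq> ?K \<and> near (z - X (Suc k) \<omega>) S)"
    unfolding ex_finite_subset_insert_iff[OF notin] by blast
  have "1 - (if A \<or> B then 1 else 0) = (1 - (if A then 1 else 0)) * (1 - (if B then 1 else (0::real)))"
    for A B by simp
  then show ?thesis
    unfolding fapp_def K near_def[symmetric] iff .
qed

lemma fapp_nonneg [simp]: "0 \<le> fapp X \<epsilon> k \<omega> z"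
  and fapp_le_1 [simp]: "fapp X \<epsilon> k \<omega> z \<le> 1"
  unfolding fapp_def by auto

lemma fapp_eq_1_near_0: "\<bar>z\<bar> < \<epsilon> \<Longrightarrow> fapp X \<epsilon> k \<omega> z = 1"
  unfolding fapp_def by (auto intro!: exI[of _ "{}"])

lemma fapp_mono: "k \<le> l \<Longrightarrow> fapp X \<epsilon> k \<omega> z \<le> fapp X \<epsilon> l \<omega> z"
  unfolding fapp_def using order_trans[of _ k l] by (smt (verit) Collect_mono subset_trans)

lemma space_natfilt [simp]: "space (natfilt M X k) = space M"
  unfolding natfilt_def by (rule space_measure_of) auto

lemma sets_natfilt: "sets (natfilt M X k) = sigma_sets (space M)
     {X i -` B \<inter> space M | i B. 1 \<le> i \<and> enat i \<le> k \<and> B \<in> sets borel}"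
  unfolding natfilt_def by (rule sets_measure_of) auto

lemma natfilt_mono: "k \<le> l \<Longrightarrow> sets (natfilt M X k) \<subseteq> sets (natfilt M X l)"
  unfolding sets_natfilt by (rule sigma_sets_mono') (use order_trans in fastforce)

lemma filtration_natfilt: "filtration (space M) (natfilt M X)"
  by unfold_locales (auto simp: natfilt_mono)

lemma subalgebra_natfilt:
  assumes "\<And>i. 1 \<le> i \<Longrightarrow> X i \<in> borel_measurable M"
  shows "subalgebra M (natfilt M X k)"
proof -
  have "sets (natfilt M X k) \<subseteq> sets M"
    unfolding sets_natfilt
    by (rule sets.sigma_sets_subset) (use assms in \<open>auto intro: measurable_sets\<close>)
  then show ?thesis unfolding subalgebra_def by simp
qed

lemma measurable_natfilt:
  assumes "1 \<le> i" "enat i \<le> k"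
  shows "X i \<in> borel_measurable (natfilt M X k)"
proof (rule borel_measurableI)
  fix S :: "real set" assume "open S"
  then show "X i -` S \<inter> space (natfilt M X k) \<in> sets (natfilt M X k)"
    unfolding sets_natfilt using assms \<open>open S\<close>
    by (intro sigma_sets.Basic CollectI exI[of _ i] exI[of _ S]) auto
qed

lemma countable_finite_subsets: "countable {S. finite S \<and> S \<subseteq> (K :: nat set)}"
  by (rule countable_subset[OF _ countable_Collect_finite]) auto

lemma fapp_eq_bex:
  "fapp X \<epsilon> k \<omega> z = (if \<exists>S\<in>{S. finite S \<and> S \<subseteq> {i. 1 \<le> i \<and> enat i \<le> k}}.
     \<bar>z - (\<Sum>i\<in>S. X i \<omega>)\<bar> < \<epsilon> then 1 else 0)"
  unfolding fapp_def Bex_def mem_Collect_eq conj_assoc ..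

lemma measurable_fapp [measurable (raw)]:
  assumes "a \<in> N \<rightarrow>\<^sub>M natfilt M X k" and [measurable]: "b \<in> N \<rightarrow>\<^sub>M borel"
  shows "(\<lambda>p. fapp X \<epsilon> k (a p) (b p)) \<in> borel_measurable N"
proof -
  have near: "Measurable.pred N (\<lambda>p. \<bar>b p - s p\<bar> < \<epsilon>)" if "s \<in> borel_measurable N" for s
  proof -
    note [measurable] = that
    show ?thesis by measurable
  qed
  have Xa: "(\<lambda>p. X i (a p)) \<in> borel_measurable N" if "1 \<le> i" "enat i \<le> k" for i
    using measurable_compose[OF assms(1) measurable_natfilt[OF that]] .
  have "Measurable.pred N (\<lambda>p. \<bar>b p - (\<Sum>i\<in>S. X i (a p))\<bar> < \<epsilon>)"
    if "S \<in> {S. finite S \<and> S \<subseteq> {i. 1 \<le> i \<and> enat i \<le> k}}" for S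
    using that by (intro near borel_measurable_sum Xa) auto
  then have "Measurable.pred N (\<lambda>p. \<exists>S\<in>{S. finite S \<and> S \<subseteq> {i. 1 \<le> i \<and> enat i \<le> k}}.
      \<bar>b p - (\<Sum>i\<in>S. X i (a p))\<bar> < \<epsilon>)"
    by (intro measurable_pred_countable(2) countable_finite_subsets)
  note pred = this[unfolded pred_def]
  show ?thesis unfolding fapp_eq_bex by (intro measurable_If measurable_const pred) simp_all
qed

lemma measurable_fapp_point [measurable]: "fapp X \<epsilon> k \<omega> \<in> borel_measurable borel"
proof -
  have "Measurable.pred borel (\<lambda>z. \<exists>S\<in>{S. finite S \<and> S \<subseteq> {i. 1 \<le> i \<and> enat i \<le> k}}.
      \<bar>z - (\<Sum>i\<in>S. X i \<omega>)\<bar> < \<epsilon>)"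
    by (intro measurable_pred_countable(2) countable_finite_subsets) measurable
  note pred = this[unfolded pred_def]
  show ?thesis unfolding fapp_eq_bex[abs_def] by (intro measurable_If measurable_const pred) simp_all
qed

section \<open>The uncovered fraction\<close>

lemma set_nn_integral_eq_set_integral:
  fixes h :: "'a \<Rightarrow> real"
  assumes "set_integrable M A h" and "\<And>x. x \<in> A \<Longrightarrow> 0 \<le> h x"
  shows "(\<integral>\<^sup>+x\<in>A. h x \<partial>M) = ennreal (LINT x:A|M. h x)"
  unfolding set_lebesgue_integral_def nn_integral_set_ennreal using assms
  by (subst nn_integral_eq_integral) (auto simp: mult_ac set_integrable_def indicator_def)

lemma set_integrable_sym_interval:
  fixes h :: "real \<Rightarrow> real"
  assumes "h \<in> borel_measurable borel" and "\<And>z. \<bar>h z\<bar> \<le> 1"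
  shows "set_integrable lborel {-1..1} h"
  unfolding set_integrable_def using assms
  by (intro integrableI_bounded_set_indicator[where B=1]) auto

lemma vfrac_nonneg: "0 \<le> vfrac X \<epsilon> k \<omega>"
  unfolding vfrac_def set_lebesgue_integral_def by simp

lemma set_integral_compl_fapp:
  "(LINT z:{-1..1}|lborel. 1 - fapp X \<epsilon> k \<omega> z) = 2 * (1 - vfrac X \<epsilon> k \<omega>)"
proof -
  have "set_integrable lborel {-1..1} (fapp X \<epsilon> k \<omega>)"
    by (rule set_integrable_sym_interval) auto
  moreover have "set_integrable lborel {-1..1} (\<lambda>_::real. 1::real)"
    by (rule set_integrable_sym_interval) auto
  ultimately show ?thesis
    by (simp add: set_integral_diff set_integral_const vfrac_def algebra_simps)
qed

lemma vfrac_le_1: "vfrac X \<epsilon> k \<omega> \<le> 1"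
proof -
  have "0 \<le> (LINT z:{-1..1}|lborel. 1 - fapp X \<epsilon> k \<omega> z)"
    unfolding set_lebesgue_integral_def by simp
  then show ?thesis unfolding set_integral_compl_fapp by simp
qed

lemma nn_integral_uncovered:
  "(\<integral>\<^sup>+z\<in>{-1..1}. ennreal (1 - fapp X \<epsilon> k \<omega> z) \<partial>lborel) = ennreal (2 * (1 - vfrac X \<epsilon> k \<omega>))"
  by (subst set_nn_integral_eq_set_integral)
     (auto intro: set_integrable_sym_interval simp: set_integral_compl_fapp)

lemma vfrac_mono: "k \<le> l \<Longrightarrow> vfrac X \<epsilon> k \<omega> \<le> vfrac X \<epsilon> l \<omega>"
  unfolding vfrac_def
  by (auto intro!: set_integral_mono set_integrable_sym_interval fapp_mono)

lemma measurable_vfrac [measurable]: "vfrac X \<epsilon> k \<in> borel_measurable (natfilt M X k)"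
  unfolding vfrac_def set_lebesgue_integral_def by measurable

lemma tau1_eq_Inf: "tau1 X \<epsilon> \<omega> = Inf {i. i \<noteq> \<infinity> \<and> 1/2 < vfrac X \<epsilon> i \<omega>}"
proof (cases "\<exists>t. 1/2 < vfrac X \<epsilon> (enat t) \<omega>")
  case True
  let ?n = "LEAST t. 1/2 < vfrac X \<epsilon> (enat t) \<omega>"
  have "Inf {i. i \<noteq> \<infinity> \<and> 1/2 < vfrac X \<epsilon> i \<omega>} = enat ?n"
  proof (rule antisym)
    show "Inf {i. i \<noteq> \<infinity> \<and> 1/2 < vfrac X \<epsilon> i \<omega>} \<le> enat ?n"
      using LeastI_ex[OF True] by (intro Inf_lower) simp
    show "enat ?n \<le> Inf {i. i \<noteq> \<infinity> \<and> 1/2 < vfrac X \<epsilon> i \<omega>}"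
      by (rule Inf_greatest) (auto intro: Least_le)
  qed
  with True show ?thesis unfolding tau1_def by simp
next
  case False
  then have "{i. i \<noteq> \<infinity> \<and> 1/2 < vfrac X \<epsilon> i \<omega>} = {}" by auto
  then have "Inf {i. i \<noteq> \<infinity> \<and> 1/2 < vfrac X \<epsilon> i \<omega>} = \<infinity>"
    by (simp only: Inf_empty top_enat_def)
  with False show ?thesis unfolding tau1_def by simp
qed

lemma stopping_time_tau1: "stopping_time (natfilt M X) (tau1 X \<epsilon>)"
proof -
  have "Measurable.pred (natfilt M X i) (\<lambda>\<omega>. i \<noteq> \<infinity> \<and> 1/2 < vfrac X \<epsilon> i \<omega>)" for i
    by measurable
  from stopping_time_Inf_enat[OF filtration_natfilt this]
  show ?thesis by (simp add: tau1_eq_Inf[abs_def])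
qed

lemma vfrac_le_of_tau1_infinite: "tau1 X \<epsilon> \<omega> = \<infinity> \<Longrightarrow> vfrac X \<epsilon> (enat k) \<omega> \<le> 1/2"
  unfolding tau1_def by (metis enat.distinct(1) linorder_not_le)

lemma vfrac_tau1: "tau1 X \<epsilon> \<omega> = enat n \<Longrightarrow> 1/2 < vfrac X \<epsilon> (enat n) \<omega>"
  unfolding tau1_def by (auto split: if_splits intro: LeastI_ex)

section \<open>The overlap integral\<close>

definition overlap :: "(real \<Rightarrow> real) \<Rightarrow> ennreal" where
  "overlap g = (\<integral>\<^sup>+x\<in>{-1..1}. (\<integral>\<^sup>+z\<in>{-1..1}. ennreal (g z * g (z - x)) \<partial>lborel) \<partial>lborel)"

lemma nn_integral_shift_window:
  fixes g :: "real \<Rightarrow> real"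
  assumes [measurable]: "g \<in> borel_measurable borel"
  shows "(\<integral>\<^sup>+x\<in>{-1..1}. ennreal (g (z - x)) \<partial>lborel) = (\<integral>\<^sup>+y\<in>{z-1..z+1}. ennreal (g y) \<partial>lborel)"
  using nn_integral_real_affine[of "\<lambda>y. ennreal (g y) * indicator {z-1..z+1} y" "-1" z]
  by (simp add: indicator_def conj_commute)

lemma overlap_eq_window:
  fixes g :: "real \<Rightarrow> real"
  assumes [measurable]: "g \<in> borel_measurable borel" and "\<And>y. 0 \<le> g y"
  shows "overlap g =
    (\<integral>\<^sup>+z\<in>{-1..1}. ennreal (g z) * (\<integral>\<^sup>+y\<in>{z-1..z+1}. ennreal (g y) \<partial>lborel) \<partial>lborel)"
proof -
  define F where "F z x = ennreal (g z) * indicator {-1..1} z * (ennreal (g (z - x)) * indicator {-1..1} x)"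
    for z x
  have [measurable]: "case_prod F \<in> borel_measurable (lborel \<Otimes>\<^sub>M lborel)"
    unfolding F_def by measurable
  have "overlap g = (\<integral>\<^sup>+x. \<integral>\<^sup>+z. F z x \<partial>lborel \<partial>lborel)"
    unfolding overlap_def F_def
    by (auto intro!: nn_integral_cong simp: nn_integral_cmult[symmetric] ennreal_mult assms(2) mult_ac)
  also have "\<dots> = (\<integral>\<^sup>+z. \<integral>\<^sup>+x. F z x \<partial>lborel \<partial>lborel)"
    by (rule lborel_pair.Fubini') measurable
  also have "\<dots> = (\<integral>\<^sup>+z\<in>{-1..1}. ennreal (g z) * (\<integral>\<^sup>+x\<in>{-1..1}. ennreal (g (z - x)) \<partial>lborel) \<partial>lborel)"
  proof (rule nn_integral_cong)
    fix z
    have "(\<integral>\<^sup>+x. F z x \<partial>lborel) =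
        ennreal (g z) * indicator {-1..1} z * (\<integral>\<^sup>+x\<in>{-1..1}. ennreal (g (z - x)) \<partial>lborel)"
      unfolding F_def by (rule nn_integral_cmult) measurable
    then show "(\<integral>\<^sup>+x. F z x \<partial>lborel) =
        ennreal (g z) * (\<integral>\<^sup>+x\<in>{-1..1}. ennreal (g (z - x)) \<partial>lborel) * indicator {-1..1} z"
      by (simp add: mult_ac)
  qed
  finally show ?thesis
    by (simp add: nn_integral_shift_window)
qed

lemma window_le_mass_plus:
  fixes g :: "real \<Rightarrow> real"
  assumes [measurable]: "g \<in> borel_measurable borel" and "\<And>y. g y \<le> 1" and "z \<in> {-1..1}"
  shows "(\<integral>\<^sup>+y\<in>{z-1..z+1}. ennreal (g y) \<partial>lborel) \<le>
    (\<integral>\<^sup>+y\<in>{-1..1}. ennreal (g y) \<partial>lborel) + ennreal \<bar>z\<bar>"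
proof -
  define D where "D = {z-1..z+1} - {-1..1::real}"
  have "(\<integral>\<^sup>+y\<in>{z-1..z+1}. ennreal (g y) \<partial>lborel) \<le>
      (\<integral>\<^sup>+y. ennreal (g y) * indicator {-1..1} y + indicator D y \<partial>lborel)"
    by (intro nn_integral_mono) (use assms(2) in \<open>auto simp: indicator_def D_def\<close>)
  also have "\<dots> = (\<integral>\<^sup>+y\<in>{-1..1}. ennreal (g y) \<partial>lborel) + emeasure lborel D"
    unfolding D_def by (subst nn_integral_add) auto
  also have "emeasure lborel D \<le> ennreal \<bar>z\<bar>"
  proof (cases "0 \<le> z")
    case True
    then have "emeasure lborel D \<le> emeasure lborel {1<..z+1}"
      by (intro emeasure_mono) (auto simp: D_def)
    with True show ?thesis by simp
  next
    case False
    then have "emeasure lborel D \<le> emeasure lborel {z-1..<-1}"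
      by (intro emeasure_mono) (auto simp: D_def)
    with False show ?thesis by simp
  qed
  finally show ?thesis by (simp add: add_left_mono)
qed

lemma window_le_of_vanishing:
  fixes g :: "real \<Rightarrow> real"
  assumes "\<And>y. g y \<le> 1" and "\<And>y. \<bar>y\<bar> < \<epsilon> \<Longrightarrow> g y = 0" and "0 < \<epsilon>" and "z \<in> {-1..1}"
  shows "(\<integral>\<^sup>+y\<in>{z-1..z+1}. ennreal (g y) \<partial>lborel) \<le> ennreal (2 - min \<epsilon> 1)"
proof -
  define e where "e = min \<epsilon> 1"
  have e: "0 < e" "e \<le> 1" "e \<le> \<epsilon>" using \<open>0 < \<epsilon>\<close> by (auto simp: e_def)
  have "(\<integral>\<^sup>+y\<in>{z-1..z+1}. ennreal (g y) \<partial>lborel) \<le> (\<integral>\<^sup>+y. indicator ({z-1..z+1} - {-e<..<e}) y \<partial>lborel)"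
    using e assms(1,2) by (intro nn_integral_mono) (auto simp: indicator_def)
  also have "\<dots> = emeasure lborel ({z-1..z+1} - {-e<..<e})"
    by simp
  also have "\<dots> \<le> ennreal (2 - e)"
  proof (cases "0 \<le> z")
    case True
    have "emeasure lborel ({z-1..z+1} - {-e<..<e}) \<le> emeasure lborel ({z-1..z+1} - {0..<e})"
      by (rule emeasure_mono) auto
    also have "\<dots> = emeasure lborel {z-1..z+1} - emeasure lborel {0..<e}"
      using True assms(4) e by (intro emeasure_Diff) auto
    also have "\<dots> = ennreal (2 - e)" using e ennreal_minus[of e 2] by simp
    finally show ?thesis .
  next
    case False
    have "emeasure lborel ({z-1..z+1} - {-e<..<e}) \<le> emeasure lborel ({z-1..z+1} - {-e<..0})"
      by (rule emeasure_mono) auto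
    also have "\<dots> = emeasure lborel {z-1..z+1} - emeasure lborel {-e<..0}"
      using False assms(4) e by (intro emeasure_Diff) auto
    also have "\<dots> = ennreal (2 - e)" using e ennreal_minus[of e 2] by simp
    finally show ?thesis .
  qed
  finally show ?thesis by (simp add: e_def)
qed

lemma overlap_le_of_vanishing:
  fixes g :: "real \<Rightarrow> real"
  assumes [measurable]: "g \<in> borel_measurable borel" and "\<And>y. 0 \<le> g y" "\<And>y. g y \<le> 1"
    and "\<And>y. \<bar>y\<bar> < \<epsilon> \<Longrightarrow> g y = 0" and "0 < \<epsilon>"
  shows "overlap g \<le> (\<integral>\<^sup>+z\<in>{-1..1}. ennreal (g z) \<partial>lborel) * ennreal (2 - min \<epsilon> 1)"
proof -
  have "overlap g \<le> (\<integral>\<^sup>+z\<in>{-1..1}. ennreal (g z) * ennreal (2 - min \<epsilon> 1) \<partial>lborel)"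
    unfolding overlap_eq_window[OF assms(1,2)]
  proof (rule nn_integral_mono)
    fix z :: real
    show "ennreal (g z) * (\<integral>\<^sup>+y\<in>{z-1..z+1}. ennreal (g y) \<partial>lborel) * indicator {-1..1} z \<le>
        ennreal (g z) * ennreal (2 - min \<epsilon> 1) * indicator {-1..1} z"
    proof (cases "z \<in> {-1..1}")
      case True
      then show ?thesis
        using window_le_of_vanishing[OF assms(3-5) True] by (simp add: mult_left_mono)
    qed simp
  qed
  also have "\<dots> = (\<integral>\<^sup>+z\<in>{-1..1}. ennreal (g z) \<partial>lborel) * ennreal (2 - min \<epsilon> 1)"
    by (subst nn_integral_multc[symmetric]) (auto simp: mult_ac)
  finally show ?thesis .
qed

lemma nn_integral_excess_half:
  "(\<integral>\<^sup>+z\<in>{-1..1}. ennreal (\<bar>z\<bar> - 1/2) \<partial>lborel) = ennreal (1/4)"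
proof -
  have "(\<integral>\<^sup>+z\<in>{-1..1}. ennreal (\<bar>z\<bar> - 1/2) \<partial>lborel) =
      (\<integral>\<^sup>+z. ennreal (z - 1/2) * indicator {1/2..1} z + ennreal (- z - 1/2) * indicator {-1..-1/2} z \<partial>lborel)"
    by (rule nn_integral_cong) (auto simp: indicator_def abs_if ennreal_neg)
  also have "\<dots> = (\<integral>\<^sup>+z. ennreal (z - 1/2) * indicator {1/2..1} z \<partial>lborel)
      + (\<integral>\<^sup>+z. ennreal (- z - 1/2) * indicator {-1..-1/2} z \<partial>lborel)"
    by (rule nn_integral_add) auto
  also have "(\<integral>\<^sup>+z. ennreal (z - 1/2) * indicator {1/2..1} z \<partial>lborel) = ennreal (1/8)"
    by (subst nn_integral_FTC_Icc[where F="\<lambda>z. z^2/2 - z/2"])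
       (auto intro!: derivative_eq_intros simp: power2_eq_square)
  also have "(\<integral>\<^sup>+z. ennreal (- z - 1/2) * indicator {-1..-1/2} z \<partial>lborel) = ennreal (1/8)"
    by (subst nn_integral_FTC_Icc[where F="\<lambda>z. - (z^2/2) - z/2"])
       (auto intro!: derivative_eq_intros simp: power2_eq_square)
  finally show ?thesis by (simp flip: ennreal_plus)
qed

lemma first_moment_le_mass:
  fixes g :: "real \<Rightarrow> real"
  assumes "\<And>y. 0 \<le> g y"
  shows "(\<integral>\<^sup>+z\<in>{-1..1}. ennreal (g z * \<bar>z\<bar>) \<partial>lborel) \<le> (\<integral>\<^sup>+z\<in>{-1..1}. ennreal (g z) \<partial>lborel)"
  using assms by (intro nn_integral_mono) (auto simp: indicator_def intro!: ennreal_leI mult_left_le)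

lemma first_moment_le_half_mass:
  fixes g :: "real \<Rightarrow> real"
  assumes [measurable]: "g \<in> borel_measurable borel" and "\<And>y. 0 \<le> g y" "\<And>y. g y \<le> 1"
    and mass: "(\<integral>\<^sup>+z\<in>{-1..1}. ennreal (g z) \<partial>lborel) = ennreal c" and "0 \<le> c"
  shows "(\<integral>\<^sup>+z\<in>{-1..1}. ennreal (g z * \<bar>z\<bar>) \<partial>lborel) \<le> ennreal (c/2 + 1/4)"
proof -
  have "ennreal (g z * \<bar>z\<bar>) \<le> ennreal (g z) / 2 + ennreal (max (\<bar>z\<bar> - 1/2) 0)" for z
  proof -
    have "g z * \<bar>z\<bar> \<le> g z / 2 + max (\<bar>z\<bar> - 1/2) 0"
    proof (cases "\<bar>z\<bar> \<le> 1/2")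
      case True
      then show ?thesis using mult_left_mono[OF True assms(2)] by simp
    next
      case False
      then show ?thesis using mult_right_mono[OF assms(3), of "\<bar>z\<bar> - 1/2" z] by (simp add: algebra_simps)
    qed
    then have "ennreal (g z * \<bar>z\<bar>) \<le> ennreal (g z / 2 + max (\<bar>z\<bar> - 1/2) 0)"
      by (rule ennreal_leI)
    also have "\<dots> = ennreal (g z) / 2 + ennreal (max (\<bar>z\<bar> - 1/2) 0)"
      using assms(2) by (subst ennreal_plus) (auto simp: ennreal_divide_numeral)
    finally show ?thesis .
  qed
  then have "(\<integral>\<^sup>+z\<in>{-1..1}. ennreal (g z * \<bar>z\<bar>) \<partial>lborel) \<le>
      (\<integral>\<^sup>+z. ennreal (g z) * indicator {-1..1} z / 2
        + ennreal (max (\<bar>z\<bar> - 1/2) 0) * indicator {-1..1} z \<partial>lborel)"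
    by (intro nn_integral_mono) (auto simp: indicator_def)
  also have "\<dots> = ennreal c / 2 + ennreal (1/4)"
    by (simp add: nn_integral_add nn_integral_divide mass nn_integral_excess_half)
  also have "\<dots> = ennreal (c/2 + 1/4)"
    using assms(5) by (subst ennreal_plus) (auto simp: ennreal_divide_numeral)
  finally show ?thesis .
qed

lemma overlap_quadratic_arith:
  fixes c m :: real
  assumes "0 \<le> c" "c \<le> 1" "m \<le> c" "m \<le> c/2 + 1/4"
  shows "c * c + m \<le> 3/2 * c + c^2 / 4"
proof (cases "c \<le> 2/3")
  case True
  then have "c * c \<le> 2/3 * c" using assms(1) by (intro mult_right_mono) auto
  with assms(3) show ?thesis by (simp add: power2_eq_square)
next
  case False
  then have "0 \<le> (3 * c - 1) * (1 - c)" using assms(2) by (intro mult_nonneg_nonneg) auto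
  with assms(4) show ?thesis by (simp add: power2_eq_square algebra_simps)
qed

lemma overlap_le_quadratic:
  fixes g :: "real \<Rightarrow> real"
  assumes [measurable]: "g \<in> borel_measurable borel" and "\<And>y. 0 \<le> g y" "\<And>y. g y \<le> 1"
    and mass: "(\<integral>\<^sup>+z\<in>{-1..1}. ennreal (g z) \<partial>lborel) = ennreal c" and "0 \<le> c" "c \<le> 1"
  shows "overlap g \<le> ennreal (3/2 * c + c^2 / 4)"
proof -
  define m where "m = (\<integral>\<^sup>+z\<in>{-1..1}. ennreal (g z * \<bar>z\<bar>) \<partial>lborel)"
  have m_le: "m \<le> ennreal c" "m \<le> ennreal (c/2 + 1/4)"
    unfolding m_def using first_moment_le_mass[of g, OF assms(2)] first_moment_le_half_mass[OF assms(1-5)]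
    by (simp_all add: mass)
  then obtain m' where m': "m = ennreal m'" "0 \<le> m'"
    by (metis ennreal_cases ennreal_less_top not_le top_greatest)
  have "overlap g \<le> (\<integral>\<^sup>+z\<in>{-1..1}. ennreal (g z) * (ennreal c + ennreal \<bar>z\<bar>) \<partial>lborel)"
    unfolding overlap_eq_window[OF assms(1,2)]
  proof (rule nn_integral_mono)
    fix z :: real
    show "ennreal (g z) * (\<integral>\<^sup>+y\<in>{z-1..z+1}. ennreal (g y) \<partial>lborel) * indicator {-1..1} z \<le>
        ennreal (g z) * (ennreal c + ennreal \<bar>z\<bar>) * indicator {-1..1} z"
    proof (cases "z \<in> {-1..1}")
      case True
      then show ?thesis
        using window_le_mass_plus[OF assms(1,3) True] by (simp add: mass mult_left_mono)
    qed simp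
  qed
  also have "\<dots> = (\<integral>\<^sup>+z. ennreal (g z) * indicator {-1..1} z * ennreal c
      + ennreal (g z * \<bar>z\<bar>) * indicator {-1..1} z \<partial>lborel)"
    using assms(2) by (intro nn_integral_cong) (simp add: distrib_left ennreal_mult mult_ac)
  also have "\<dots> = ennreal c * ennreal c + m"
    unfolding m_def by (simp add: nn_integral_add nn_integral_multc mass)
  also have "\<dots> = ennreal (c * c + m')"
    using m' assms(5) by (simp add: ennreal_mult ennreal_plus)
  also have "\<dots> \<le> ennreal (3/2 * c + c^2 / 4)"
  proof (intro ennreal_leI overlap_quadratic_arith)
    show "m' \<le> c" "m' \<le> c/2 + 1/4"
      using m_le assms(5) unfolding m'(1) by (simp_all add: ennreal_le_iff del: ennreal_plus)
  qed (use assms(5,6) in auto)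
  finally show ?thesis .
qed

section \<open>Conditional expectations at stopping times\<close>

lemma (in prob_space) nn_integral_indep_pair:
  assumes F: "subalgebra M F" and [measurable]: "Y \<in> M \<rightarrow>\<^sub>M N"
    and indep: "\<And>A B. A \<in> sets F \<Longrightarrow> B \<in> sets N \<Longrightarrow>
      prob (A \<inter> (Y -` B \<inter> space M)) = prob A * prob (Y -` B \<inter> space M)"
    and [measurable]: "G \<in> borel_measurable (F \<Otimes>\<^sub>M N)"
  shows "(\<integral>\<^sup>+\<omega>. G (\<omega>, Y \<omega>) \<partial>M) = (\<integral>\<^sup>+\<omega>. (\<integral>\<^sup>+y. G (\<omega>, y) \<partial>distr M N Y) \<partial>M)"
proof -
  have [measurable]: "(\<lambda>\<omega>. \<omega>) \<in> M \<rightarrow>\<^sub>M F"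
    using F by (intro measurableI) (auto simp: subalgebra_def)
  interpret P: prob_space "distr M F (\<lambda>\<omega>. \<omega>)" by (rule prob_space_distr) measurable
  interpret Y: prob_space "distr M N Y" by (rule prob_space_distr) measurable
  have prod: "distr M F (\<lambda>\<omega>. \<omega>) \<Otimes>\<^sub>M distr M N Y = distr M (F \<Otimes>\<^sub>M N) (\<lambda>\<omega>. (\<omega>, Y \<omega>))"
  proof (rule pair_measure_eqI)
    fix A B assume "A \<in> sets (distr M F (\<lambda>\<omega>. \<omega>))" "B \<in> sets (distr M N Y)"
    then have [measurable]: "A \<in> sets F" "B \<in> sets N" by auto
    have AM: "A \<in> sets M" using F by (auto simp: subalgebra_def)
    have "A \<times> B \<in> sets (F \<Otimes>\<^sub>M N)" by measurable
    moreover have "(\<lambda>\<omega>. (\<omega>, Y \<omega>)) -` (A \<times> B) \<inter> space M = A \<inter> (Y -` B \<inter> space M)"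
      using sets.sets_into_space[OF AM] by auto
    ultimately show "emeasure (distr M F (\<lambda>\<omega>. \<omega>)) A * emeasure (distr M N Y) B =
        emeasure (distr M (F \<Otimes>\<^sub>M N) (\<lambda>\<omega>. (\<omega>, Y \<omega>))) (A \<times> B)"
      using indep[of A B] AM sets.sets_into_space[OF AM]
      by (simp add: emeasure_distr emeasure_eq_measure ennreal_mult Int_absorb2)
  qed (simp_all add: P.sigma_finite_measure Y.sigma_finite_measure)
  have "(\<integral>\<^sup>+\<omega>. G (\<omega>, Y \<omega>) \<partial>M) = (\<integral>\<^sup>+p. G p \<partial>distr M F (\<lambda>\<omega>. \<omega>) \<Otimes>\<^sub>M distr M N Y)"
    unfolding prod by (subst nn_integral_distr) auto
  also have "\<dots> = (\<integral>\<^sup>+\<omega>. (\<integral>\<^sup>+y. G (\<omega>, y) \<partial>distr M N Y) \<partial>distr M F (\<lambda>\<omega>. \<omega>))"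
    by (rule Y.nn_integral_fst[symmetric]) simp
  also have "\<dots> = (\<integral>\<^sup>+\<omega>. (\<integral>\<^sup>+y. G (\<omega>, y) \<partial>distr M N Y) \<partial>M)"
    by (subst nn_integral_distr) (auto intro!: Y.borel_measurable_nn_integral_fst)
  finally show ?thesis .
qed

lemma stopping_time_plus_enat:
  fixes F :: "enat \<Rightarrow> 'a measure"
  assumes F: "filtration \<Omega> F" and T: "stopping_time F T"
  shows "stopping_time F (\<lambda>\<omega>. T \<omega> + enat c)"
proof (rule stopping_timeI)
  fix s :: enat
  show "Measurable.pred (F s) (\<lambda>\<omega>. T \<omega> + enat c \<le> s)"
  proof (cases s)
    case (enat m)
    show ?thesis
    proof (cases "c \<le> m")
      case True
      have "T \<omega> + enat c \<le> s \<longleftrightarrow> T \<omega> \<le> enat (m - c)" for \<omega>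
        using True enat by (cases "T \<omega>") auto
      then show ?thesis
        using filtration.stopping_time_le_const[OF F T, of "enat (m - c)" s] enat by simp
    next
      case False
      then have "\<not> T \<omega> + enat c \<le> s" for \<omega>
        using enat by (cases "T \<omega>") auto
      then show ?thesis by simp
    qed
  qed simp
qed

context filtration
begin

lemma sets_pre_sigma_eq_const:
  assumes T: "stopping_time F T" and A: "A \<in> sets (pre_sigma T)"
  shows "{\<omega>\<in>A. T \<omega> = t} \<in> sets (F t)"
proof -
  have "A \<subseteq> \<Omega>"
    using sets.sets_into_space[OF A] by (simp add: space_pre_sigma)
  then have "{\<omega>\<in>A. T \<omega> = t} = {\<omega>\<in>A. T \<omega> \<le> t} \<inter> {\<omega>\<in>space (F t). T \<omega> = t}"
    by (auto simp: space_F)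
  moreover have "{\<omega>\<in>space (F t). T \<omega> = t} \<in> sets (F t)"
    using stopping_time_eq_const[OF T] by (simp add: pred_def)
  ultimately show ?thesis
    using sets_pre_sigmaD[OF T A] by auto
qed

end

lemma measurable_pre_sigma_case_enat:
  fixes F :: "enat \<Rightarrow> 'a measure" and f :: "nat \<Rightarrow> 'a \<Rightarrow> real"
  assumes F: "filtration \<Omega> F" and T: "stopping_time F T"
    and f: "\<And>n. f n \<in> borel_measurable (F (enat n))"
  shows "(\<lambda>\<omega>. case T \<omega> of enat n \<Rightarrow> f n \<omega> | \<infinity> \<Rightarrow> 0) \<in> borel_measurable (filtration.pre_sigma \<Omega> F T)"
proof (rule borel_measurableI_le)
  interpret filtration \<Omega> F by (rule F)
  fix a :: real
  let ?h = "\<lambda>\<omega>. case T \<omega> of enat n \<Rightarrow> f n \<omega> | \<infinity> \<Rightarrow> 0"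
  have lift: "g \<in> F s \<rightarrow>\<^sub>M N \<Longrightarrow> s \<le> t \<Longrightarrow> g \<in> F t \<rightarrow>\<^sub>M N" for g N s t
    by (erule measurable_from_subalg[rotated]) (simp add: subalgebra_def space_F sets_F_mono)
  have piece: "Measurable.pred (F t) (\<lambda>\<omega>. T \<omega> = enat n \<and> f n \<omega> \<le> a)" if "enat n \<le> t" for n t
  proof -
    have [measurable]: "Measurable.pred (F t) (\<lambda>\<omega>. T \<omega> = enat n)" "f n \<in> borel_measurable (F t)"
      using that by (auto intro: lift f stopping_time_eq_const[OF T])
    show ?thesis by measurable
  qed
  have "Measurable.pred (F t) (\<lambda>\<omega>. ?h \<omega> \<le> a \<and> T \<omega> \<le> t)" for t
  proof (cases t)
    case (enat m)
    have "?h \<omega> \<le> a \<and> T \<omega> \<le> t \<longleftrightarrow> (\<exists>n\<in>{..m}. T \<omega> = enat n \<and> f n \<omega> \<le> a)" for \<omega>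
      using enat by (cases "T \<omega>") auto
    moreover have "Measurable.pred (F t) (\<lambda>\<omega>. \<exists>n\<in>{..m}. T \<omega> = enat n \<and> f n \<omega> \<le> a)"
      using enat by (intro pred_intros_countable_bounded piece) simp
    ultimately show ?thesis
      by simp
  next
    case infinity
    have [measurable]: "Measurable.pred (F \<infinity>) (\<lambda>\<omega>. T \<omega> = \<infinity>)"
      by (rule stopping_time_eq_const[OF T])
    have "?h \<omega> \<le> a \<and> T \<omega> \<le> t \<longleftrightarrow> (\<exists>n. T \<omega> = enat n \<and> f n \<omega> \<le> a) \<or> (T \<omega> = \<infinity> \<and> 0 \<le> a)" for \<omega>
      using infinity by (cases "T \<omega>") auto
    moreover have "Measurable.pred (F \<infinity>) (\<lambda>\<omega>. \<exists>n. T \<omega> = enat n \<and> f n \<omega> \<le> a)"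
      by (intro pred_intros_countable piece) simp
    ultimately show ?thesis
      using infinity by simp
  qed
  then have "Measurable.pred (pre_sigma T) (\<lambda>\<omega>. ?h \<omega> \<le> a)"
    by (rule pred_pre_sigmaI[OF T])
  then show "{\<omega> \<in> space (pre_sigma T). ?h \<omega> \<le> a} \<in> sets (pre_sigma T)"
    by (simp add: pred_def)
qed

lemma subalgebra_pre_sigma_enat:
  fixes F :: "enat \<Rightarrow> 'a measure"
  assumes F: "filtration (space M) F" "\<And>t. subalgebra M (F t)" and T: "stopping_time F T"
  shows "subalgebra M (filtration.pre_sigma (space M) F T)"
proof -
  interpret filtration "space M" F by (rule F)
  have "A \<in> sets M" if "A \<in> sets (pre_sigma T)" for A
    using sets_pre_sigmaD[OF T that, of \<infinity>] F(2)[of \<infinity>] by (auto simp: subalgebra_def)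
  then show ?thesis by (auto simp: subalgebra_def space_pre_sigma)
qed

lemma AE_indicator_eq_suminf_enat:
  fixes T :: "'a \<Rightarrow> enat" and c :: "'a \<Rightarrow> ennreal"
  assumes "AE \<omega> in M. T \<omega> \<noteq> \<infinity>"
  shows "AE \<omega> in M. c \<omega> * indicator A \<omega> = (\<Sum>n. c \<omega> * indicator {\<omega>\<in>A. T \<omega> = enat n} \<omega>)"
  using assms
proof eventually_elim
  case (elim \<omega>)
  then obtain i where i: "T \<omega> = enat i" by auto
  have "disjoint_family (\<lambda>n. {\<omega>\<in>A. T \<omega> = enat n})"
    by (auto simp: disjoint_family_on_def)
  then show ?case
    using suminf_cmult_indicator[of _ \<omega> i "\<lambda>_. c \<omega>"] i by (cases "\<omega> \<in> A") auto
qed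

lemma (in prob_space) nn_set_integral_pre_sigma_enat:
  fixes F :: "enat \<Rightarrow> 'a measure" and Y :: "'a \<Rightarrow> real" and Z :: "nat \<Rightarrow> 'a \<Rightarrow> real"
  assumes F: "filtration (space M) F" "\<And>t. subalgebra M (F t)"
    and T: "stopping_time F T" and fin: "AE \<omega> in M. T \<omega> \<noteq> \<infinity>"
    and [measurable]: "Y \<in> borel_measurable M" and Z: "\<And>n. Z n \<in> borel_measurable (F (enat n))"
    and local_eq: "\<And>n B. B \<in> sets (F (enat n)) \<Longrightarrow> B \<subseteq> {\<omega>. T \<omega> = enat n} \<Longrightarrow>
      (\<integral>\<^sup>+\<omega>\<in>B. ennreal (Y \<omega>) \<partial>M) = (\<integral>\<^sup>+\<omega>\<in>B. ennreal (Z n \<omega>) \<partial>M)"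
    and A: "A \<in> sets (filtration.pre_sigma (space M) F T)"
  shows "(\<integral>\<^sup>+\<omega>\<in>A. ennreal (Y \<omega>) \<partial>M) =
    (\<integral>\<^sup>+\<omega>\<in>A. ennreal (case T \<omega> of enat n \<Rightarrow> Z n \<omega> | \<infinity> \<Rightarrow> 0) \<partial>M)"
proof -
  interpret filtration "space M" F by (rule F)
  let ?Z = "\<lambda>\<omega>. case T \<omega> of enat n \<Rightarrow> Z n \<omega> | \<infinity> \<Rightarrow> 0"
  define B where "B n = {\<omega>\<in>A. T \<omega> = enat n}" for n
  have B: "B n \<in> sets (F (enat n))" for n
    unfolding B_def by (rule sets_pre_sigma_eq_const[OF T A])
  have [measurable]: "B n \<in> sets M" for n
    using B F(2) by (auto simp: subalgebra_def)
  have [measurable]: "?Z \<in> borel_measurable M"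
    by (rule measurable_from_subalg[OF subalgebra_pre_sigma_enat[OF F T]
          measurable_pre_sigma_case_enat[OF F(1) T Z]])
  note split = AE_indicator_eq_suminf_enat[OF fin, of _ A, folded B_def]
  have "(\<integral>\<^sup>+\<omega>\<in>A. ennreal (Y \<omega>) \<partial>M) = (\<Sum>n. \<integral>\<^sup>+\<omega>\<in>B n. ennreal (Y \<omega>) \<partial>M)"
    unfolding nn_integral_cong_AE[OF split] by (rule nn_integral_suminf) measurable
  also have "\<dots> = (\<Sum>n. \<integral>\<^sup>+\<omega>\<in>B n. ennreal (?Z \<omega>) \<partial>M)"
  proof (intro suminf_cong)
    fix n
    have "(\<integral>\<^sup>+\<omega>\<in>B n. ennreal (Y \<omega>) \<partial>M) = (\<integral>\<^sup>+\<omega>\<in>B n. ennreal (Z n \<omega>) \<partial>M)"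
      by (rule local_eq[OF B]) (auto simp: B_def)
    also have "\<dots> = (\<integral>\<^sup>+\<omega>\<in>B n. ennreal (?Z \<omega>) \<partial>M)"
      by (rule nn_integral_cong) (auto simp: B_def indicator_def)
    finally show "(\<integral>\<^sup>+\<omega>\<in>B n. ennreal (Y \<omega>) \<partial>M) = (\<integral>\<^sup>+\<omega>\<in>B n. ennreal (?Z \<omega>) \<partial>M)" .
  qed
  also have "\<dots> = (\<integral>\<^sup>+\<omega>\<in>A. ennreal (?Z \<omega>) \<partial>M)"
    unfolding nn_integral_cong_AE[OF split] by (rule nn_integral_suminf[symmetric]) measurable
  finally show ?thesis .
qed

lemma (in prob_space) real_cond_exp_pre_sigma_enat:
  fixes F :: "enat \<Rightarrow> 'a measure" and Y :: "'a \<Rightarrow> real" and Z :: "nat \<Rightarrow> 'a \<Rightarrow> real"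
  assumes F: "filtration (space M) F" "\<And>t. subalgebra M (F t)"
    and T: "stopping_time F T" and fin: "AE \<omega> in M. T \<omega> \<noteq> \<infinity>"
    and Y: "Y \<in> borel_measurable M" "\<And>\<omega>. 0 \<le> Y \<omega>" "\<And>\<omega>. Y \<omega> \<le> c"
    and Z: "\<And>n. Z n \<in> borel_measurable (F (enat n))" "\<And>n \<omega>. 0 \<le> Z n \<omega>" "\<And>n \<omega>. Z n \<omega> \<le> c"
    and local_eq: "\<And>n B. B \<in> sets (F (enat n)) \<Longrightarrow> B \<subseteq> {\<omega>. T \<omega> = enat n} \<Longrightarrow>
      (\<integral>\<^sup>+\<omega>\<in>B. ennreal (Y \<omega>) \<partial>M) = (\<integral>\<^sup>+\<omega>\<in>B. ennreal (Z n \<omega>) \<partial>M)"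
  shows "AE \<omega> in M. real_cond_exp M (filtration.pre_sigma (space M) F T) Y \<omega> =
    (case T \<omega> of enat n \<Rightarrow> Z n \<omega> | \<infinity> \<Rightarrow> 0)"
proof -
  interpret filtration "space M" F by (rule F)
  let ?Z = "\<lambda>\<omega>. case T \<omega> of enat n \<Rightarrow> Z n \<omega> | \<infinity> \<Rightarrow> 0"
  have subalg: "subalgebra M (pre_sigma T)"
    by (rule subalgebra_pre_sigma_enat[OF F T])
  interpret S: sigma_finite_subalgebra M "pre_sigma T"
    by (intro finite_measure_subalgebra_is_sigma_finite)
       (simp add: finite_measure_subalgebra_def finite_measure_subalgebra_axioms_def subalg
         finite_measure_axioms)
  have Zm: "?Z \<in> borel_measurable (pre_sigma T)"
    by (rule measurable_pre_sigma_case_enat[OF F(1) T Z(1)])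
  have [measurable]: "?Z \<in> borel_measurable M"
    by (rule measurable_from_subalg[OF subalg Zm])
  have Z_nonneg: "0 \<le> ?Z \<omega>" for \<omega>
    using Z(2) by (cases "T \<omega>") auto
  have int: "integrable M Y" "integrable M ?Z"
    using Y fin by (auto intro!: integrable_const_bound[where B=c] elim!: eventually_mono
        split: enat.split simp: Z(2,3))
  have "(LINT \<omega>:A|M. Y \<omega>) = (LINT \<omega>:A|M. ?Z \<omega>)" if A: "A \<in> sets (pre_sigma T)" for A
  proof -
    have AM: "A \<in> sets M" using A subalg by (auto simp: subalgebra_def)
    have "set_integrable M A Y" "set_integrable M A ?Z"
      unfolding set_integrable_def using integrable_mult_indicator[OF AM] int by blast+
    then have "ennreal (LINT \<omega>:A|M. Y \<omega>) = ennreal (LINT \<omega>:A|M. ?Z \<omega>)"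
      using nn_set_integral_pre_sigma_enat[OF F T fin Y(1) Z(1) local_eq A] Y(2) Z_nonneg
      by (simp add: set_nn_integral_eq_set_integral)
    moreover have "0 \<le> (LINT \<omega>:A|M. Y \<omega>)" "0 \<le> (LINT \<omega>:A|M. ?Z \<omega>)"
      using Y(2) Z_nonneg unfolding set_lebesgue_integral_def by simp_all
    ultimately show ?thesis by simp
  qed
  then show ?thesis
    by (rule S.real_cond_exp_charact[OF _ int Zm])
qed

locale uniform_subset_sums = prob_space M for M :: "'a measure" +
  fixes X :: "nat \<Rightarrow> 'a \<Rightarrow> real" and \<epsilon> :: real
  assumes measurable_X: "\<And>i. 1 \<le> i \<Longrightarrow> X i \<in> borel_measurable M"
    and indep_X: "indep_vars (\<lambda>_. borel) X {1..}"
    and distr_X: "\<And>i. 1 \<le> i \<Longrightarrow> distr M lborel (X i) = uniform_measure lborel {-1..1}"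
    and eps_pos: "0 < \<epsilon>"
begin

abbreviation uncovered :: "nat \<Rightarrow> 'a \<Rightarrow> real \<Rightarrow> real" where
  "uncovered k \<omega> \<equiv> \<lambda>z. 1 - fapp X \<epsilon> (enat k) \<omega> z"

lemma natfilt_subalgebra: "subalgebra M (natfilt M X k)"
  by (rule subalgebra_natfilt[OF measurable_X])

lemma measurable_ident_natfilt [measurable]: "(\<lambda>\<omega>. \<omega>) \<in> M \<rightarrow>\<^sub>M natfilt M X k"
  using natfilt_subalgebra by (intro measurableI) (auto simp: subalgebra_def)

lemma prob_natfilt_inter_next:
  assumes A: "A \<in> sets (natfilt M X (enat k))" and B: "B \<in> sets (borel :: real measure)"
  shows "prob (A \<inter> (X (Suc k) -` B \<inter> space M)) = prob A * prob (X (Suc k) -` B \<inter> space M)"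
proof -
  define E where "E i = {X i -` A \<inter> space M | A. A \<in> sets (borel :: real measure)}" for i
  define I where "I b = (if b then {1..k} else {Suc k})" for b
  have "indep_sets E {1..}"
    using indep_X unfolding indep_vars_def2 E_def by simp
  then have "indep_sets E (\<Union>b. I b)"
    by (rule indep_sets_mono_index[rotated]) (auto simp: I_def)
  moreover have "Int_stable (E i)" for i
  proof (rule Int_stableI)
    fix a b assume "a \<in> E i" "b \<in> E i"
    then obtain A B where "a = X i -` A \<inter> space M" "b = X i -` B \<inter> space M" "A \<in> sets borel" "B \<in> sets borel"
      unfolding E_def by blast
    then show "a \<inter> b \<in> E i"
      unfolding E_def by (intro CollectI exI[of _ "A \<inter> B"]) auto
  qed
  moreover have "disjoint_family_on I UNIV"
    unfolding disjoint_family_on_def I_def by auto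
  ultimately have "indep_sets (\<lambda>b. sigma_sets (space M) (\<Union>i\<in>I b. E i)) UNIV"
    by (rule indep_sets_collect_sigma)
  then have indep: "indep_set (sigma_sets (space M) (\<Union>i\<in>{1..k}. E i)) (sigma_sets (space M) (E (Suc k)))"
    unfolding indep_set_def by (rule indep_sets_cong[THEN iffD1, rotated -1]) (auto simp: I_def split: bool.split)
  have "{X i -` B \<inter> space M | i B. 1 \<le> i \<and> enat i \<le> enat k \<and> B \<in> sets borel} \<subseteq> (\<Union>i\<in>{1..k}. E i)"
    unfolding E_def by fastforce
  then have "A \<in> sigma_sets (space M) (\<Union>i\<in>{1..k}. E i)"
    using A unfolding sets_natfilt by (blast dest: sigma_sets_mono')
  moreover have "X (Suc k) -` B \<inter> space M \<in> sigma_sets (space M) (E (Suc k))"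
    unfolding E_def using B by blast
  ultimately show ?thesis
    by (rule indep_setD[OF indep])
qed

lemma distr_X_borel: "distr M borel (X (Suc k)) = uniform_measure lborel {-1..1}"
proof -
  have "distr M borel (X (Suc k)) = distr M lborel (X (Suc k))" by (rule distr_cong) auto
  then show ?thesis using distr_X[of "Suc k"] by simp
qed

lemma uncovered_Suc:
  "ennreal (1 - vfrac X \<epsilon> (enat (Suc k)) \<omega>) =
    (\<integral>\<^sup>+z\<in>{-1..1}. ennreal (uncovered k \<omega> z * uncovered k \<omega> (z - X (Suc k) \<omega>)) \<partial>lborel) / 2"
proof -
  have "ennreal (1 - vfrac X \<epsilon> (enat (Suc k)) \<omega>) = ennreal (2 * (1 - vfrac X \<epsilon> (enat (Suc k)) \<omega>) / 2)"
    by (subst nonzero_mult_div_cancel_left) simp_all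
  also have "\<dots> = ennreal (2 * (1 - vfrac X \<epsilon> (enat (Suc k)) \<omega>)) / 2"
    using vfrac_le_1 by (intro ennreal_divide_numeral[symmetric]) simp
  finally show ?thesis
    unfolding nn_integral_uncovered[symmetric] fapp_Suc .
qed

lemma nn_integral_uncovered_Suc:
  assumes [measurable]: "A \<in> sets (natfilt M X (enat k))"
  shows "(\<integral>\<^sup>+\<omega>\<in>A. ennreal (1 - vfrac X \<epsilon> (enat (Suc k)) \<omega>) \<partial>M) =
    (\<integral>\<^sup>+\<omega>\<in>A. overlap (uncovered k \<omega>) \<partial>M) / 4"
proof -
  define G where "G p = (\<integral>\<^sup>+z\<in>{-1..1}. ennreal (uncovered k (fst p) z * uncovered k (fst p) (z - snd p)) \<partial>lborel)
    * indicator A (fst p)" for p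
  have [measurable]: "G \<in> borel_measurable (natfilt M X (enat k) \<Otimes>\<^sub>M borel)"
    unfolding G_def by measurable
  have [measurable]: "X (Suc k) \<in> borel_measurable M"
    by (rule measurable_X) simp
  have "(\<integral>\<^sup>+\<omega>\<in>A. ennreal (1 - vfrac X \<epsilon> (enat (Suc k)) \<omega>) \<partial>M) = (\<integral>\<^sup>+\<omega>. G (\<omega>, X (Suc k) \<omega>) / 2 \<partial>M)"
    by (auto intro!: nn_integral_cong simp: G_def uncovered_Suc divide_ennreal_def mult_ac)
  also have "\<dots> = (\<integral>\<^sup>+\<omega>. G (\<omega>, X (Suc k) \<omega>) \<partial>M) / 2"
    by (rule nn_integral_divide) measurable
  also have "(\<integral>\<^sup>+\<omega>. G (\<omega>, X (Suc k) \<omega>) \<partial>M) = (\<integral>\<^sup>+\<omega>. (\<integral>\<^sup>+x. G (\<omega>, x) \<partial>distr M borel (X (Suc k))) \<partial>M)"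
    by (rule nn_integral_indep_pair[OF natfilt_subalgebra measurable_X prob_natfilt_inter_next]) auto
  also have "\<dots> = (\<integral>\<^sup>+\<omega>. overlap (uncovered k \<omega>) * indicator A \<omega> / 2 \<partial>M)"
  proof (rule nn_integral_cong)
    fix \<omega>
    have "(\<integral>\<^sup>+x. G (\<omega>, x) \<partial>distr M borel (X (Suc k))) = (\<integral>\<^sup>+x\<in>{-1..1}. G (\<omega>, x) \<partial>lborel) / 2"
      unfolding distr_X_borel by (subst nn_integral_uniform_measure) (auto simp: G_def)
    also have "(\<integral>\<^sup>+x\<in>{-1..1}. G (\<omega>, x) \<partial>lborel) = overlap (uncovered k \<omega>) * indicator A \<omega>"
      unfolding G_def overlap_def by (subst nn_integral_multc[symmetric]) (auto simp: mult_ac)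
    finally show "(\<integral>\<^sup>+x. G (\<omega>, x) \<partial>distr M borel (X (Suc k))) = overlap (uncovered k \<omega>) * indicator A \<omega> / 2" .
  qed
  also have "\<dots> = (\<integral>\<^sup>+\<omega>\<in>A. overlap (uncovered k \<omega>) \<partial>M) / 2"
    by (rule nn_integral_divide) (unfold overlap_def, measurable)
  finally show ?thesis
    by (simp add: divide_ennreal_def mult.assoc ennreal_inverse_mult[symmetric])
qed

lemma overlap_uncovered_le_contraction:
  "overlap (uncovered k \<omega>) \<le> ennreal (4 * ((1 - min \<epsilon> 1 / 2) * (1 - vfrac X \<epsilon> (enat k) \<omega>)))"
proof -
  have "overlap (uncovered k \<omega>) \<le> ennreal (2 * (1 - vfrac X \<epsilon> (enat k) \<omega>)) * ennreal (2 - min \<epsilon> 1)"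
    unfolding nn_integral_uncovered[symmetric]
    by (rule overlap_le_of_vanishing) (auto simp: fapp_eq_1_near_0 eps_pos)
  also have "\<dots> = ennreal (4 * ((1 - min \<epsilon> 1 / 2) * (1 - vfrac X \<epsilon> (enat k) \<omega>)))"
    using vfrac_le_1 by (subst ennreal_mult[symmetric]) (auto simp: algebra_simps)
  finally show ?thesis .
qed

lemma overlap_uncovered_le_quadratic:
  assumes "1/2 \<le> vfrac X \<epsilon> (enat k) \<omega>"
  defines "w \<equiv> 1 - vfrac X \<epsilon> (enat k) \<omega>"
  shows "overlap (uncovered k \<omega>) \<le> ennreal (4 * (w * (1 - 1/4 * (1 - w))))"
proof -
  have "overlap (uncovered k \<omega>) \<le> ennreal (3/2 * (2 * w) + (2 * w)^2 / 4)"
    using assms(1) vfrac_le_1[of X \<epsilon> "enat k" \<omega>] nn_integral_uncovered[of X \<epsilon> "enat k" \<omega>]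
    unfolding w_def by (intro overlap_le_quadratic) auto
  also have "3/2 * (2 * w) + (2 * w)^2 / 4 = 4 * (w * (1 - 1/4 * (1 - w)))"
    by (simp add: field_simps power2_eq_square)
  finally show ?thesis .
qed

lemma nn_integral_uncovered_decay:
  "(\<integral>\<^sup>+\<omega>. ennreal (1 - vfrac X \<epsilon> (enat k) \<omega>) \<partial>M) \<le> ennreal ((1 - min \<epsilon> 1 / 2) ^ k)"
proof (induction k)
  case 0
  have "(\<integral>\<^sup>+\<omega>. ennreal (1 - vfrac X \<epsilon> (enat 0) \<omega>) \<partial>M) \<le> (\<integral>\<^sup>+\<omega>. 1 \<partial>M)"
    by (intro nn_integral_mono) (simp add: vfrac_nonneg)
  then show ?case by (simp add: emeasure_space_1)
next
  case (Suc k)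
  let ?\<rho> = "1 - min \<epsilon> 1 / 2"
  have "(\<integral>\<^sup>+\<omega>. ennreal (1 - vfrac X \<epsilon> (enat (Suc k)) \<omega>) \<partial>M) = (\<integral>\<^sup>+\<omega>. overlap (uncovered k \<omega>) \<partial>M) / 4"
    using nn_integral_uncovered_Suc[OF sets.top[of "natfilt M X (enat k)"]] by simp
  also have "\<dots> \<le> (\<integral>\<^sup>+\<omega>. ennreal ?\<rho> * ennreal (1 - vfrac X \<epsilon> (enat k) \<omega>) * 4 \<partial>M) / 4"
  proof (intro divide_right_mono_ennreal nn_integral_mono)
    fix \<omega>
    have "ennreal (4 * (?\<rho> * (1 - vfrac X \<epsilon> (enat k) \<omega>))) = ennreal ?\<rho> * ennreal (1 - vfrac X \<epsilon> (enat k) \<omega>) * 4"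
      using vfrac_le_1[of X \<epsilon> "enat k" \<omega>] by (simp add: ennreal_mult mult_ac)
    then show "overlap (uncovered k \<omega>) \<le> ennreal ?\<rho> * ennreal (1 - vfrac X \<epsilon> (enat k) \<omega>) * 4"
      using overlap_uncovered_le_contraction[of k \<omega>] by simp
  qed
  also have "\<dots> = ennreal ?\<rho> * (\<integral>\<^sup>+\<omega>. ennreal (1 - vfrac X \<epsilon> (enat k) \<omega>) \<partial>M)"
    by (simp add: nn_integral_multc nn_integral_cmult ennreal_mult_divide_eq)
  also have "\<dots> \<le> ennreal ?\<rho> * ennreal (?\<rho> ^ k)"
    by (intro mult_left_mono Suc.IH) simp
  also have "\<dots> = ennreal (?\<rho> ^ Suc k)"
    using eps_pos by (simp add: ennreal_mult[symmetric])
  finally show ?case .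
qed

lemma AE_tau1_finite: "AE \<omega> in M. tau1 X \<epsilon> \<omega> \<noteq> \<infinity>"
proof -
  let ?\<rho> = "1 - min \<epsilon> 1 / 2"
  define N where "N = {\<omega> \<in> space M. tau1 X \<epsilon> \<omega> = \<infinity>}"
  have [measurable]: "N \<in> sets M"
    unfolding N_def tau1_def by measurable
  have bound: "measure M N \<le> 2 * ?\<rho> ^ k" for k
  proof -
    have "emeasure M N \<le> (\<integral>\<^sup>+\<omega>. 2 * ennreal (1 - vfrac X \<epsilon> (enat k) \<omega>) \<partial>M)"
    proof (subst nn_integral_indicator[symmetric, OF \<open>N \<in> sets M\<close>], intro nn_integral_mono)
      fix \<omega>
      have "1 \<le> 2 * ennreal (1 - vfrac X \<epsilon> (enat k) \<omega>)" if "\<omega> \<in> N"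
      proof -
        have "ennreal 1 \<le> ennreal (2 * (1 - vfrac X \<epsilon> (enat k) \<omega>))"
          using vfrac_le_of_tau1_infinite[of X \<epsilon> \<omega> k] that by (intro ennreal_leI) (simp add: N_def)
        moreover have "ennreal (2 * (1 - vfrac X \<epsilon> (enat k) \<omega>)) = 2 * ennreal (1 - vfrac X \<epsilon> (enat k) \<omega>)"
          using vfrac_le_1[of X \<epsilon> "enat k" \<omega>] by (subst ennreal_mult) auto
        ultimately show ?thesis by (metis ennreal_1)
      qed
      then show "indicator N \<omega> \<le> 2 * ennreal (1 - vfrac X \<epsilon> (enat k) \<omega>)"
        by (auto simp: indicator_def)
    qed
    also have "\<dots> = 2 * (\<integral>\<^sup>+\<omega>. ennreal (1 - vfrac X \<epsilon> (enat k) \<omega>) \<partial>M)"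
      by (rule nn_integral_cmult) measurable
    also have "\<dots> \<le> 2 * ennreal (?\<rho> ^ k)"
      by (intro mult_left_mono nn_integral_uncovered_decay) simp
    also have "\<dots> = ennreal (2 * ?\<rho> ^ k)"
      by (subst ennreal_mult) auto
    finally show ?thesis
      by (simp add: emeasure_eq_measure)
  qed
  have "(\<lambda>k. 2 * ?\<rho> ^ k) \<longlonglongrightarrow> 0"
    using eps_pos by (intro tendsto_mult_right_zero LIMSEQ_power_zero) auto
  then have "measure M N \<le> 0"
    by (rule LIMSEQ_le_const) (use bound in auto)
  then have "N \<in> null_sets M"
    by (simp add: emeasure_eq_measure null_sets_def measure_le_0_iff)
  then show ?thesis
    by (rule AE_I') (auto simp: N_def)
qed

definition expected_uncovered_Suc :: "nat \<Rightarrow> 'a \<Rightarrow> real" where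
  "expected_uncovered_Suc n \<omega> = enn2real (overlap (uncovered n \<omega>)) / 4"

lemma overlap_uncovered_le_4: "overlap (uncovered n \<omega>) \<le> 4"
proof -
  have "4 * ((1 - min \<epsilon> 1 / 2) * (1 - vfrac X \<epsilon> (enat n) \<omega>)) \<le> 4 * (1 * 1)"
    using vfrac_nonneg[of X \<epsilon> "enat n" \<omega>] vfrac_le_1[of X \<epsilon> "enat n" \<omega>] eps_pos
    by (intro mult_left_mono mult_mono) auto
  then have "ennreal (4 * ((1 - min \<epsilon> 1 / 2) * (1 - vfrac X \<epsilon> (enat n) \<omega>))) \<le> ennreal 4"
    by (intro ennreal_leI) simp
  then show ?thesis
    using order_trans[OF overlap_uncovered_le_contraction] by simp
qed

lemma ennreal_expected_uncovered_Suc: "ennreal (expected_uncovered_Suc n \<omega>) = overlap (uncovered n \<omega>) / 4"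
proof -
  have "overlap (uncovered n \<omega>) \<noteq> \<top>"
    using overlap_uncovered_le_4[of n \<omega>] by (auto simp: top_unique)
  then show ?thesis
    unfolding expected_uncovered_Suc_def less_top
    by (simp add: ennreal_divide_numeral[symmetric] ennreal_enn2real)
qed

lemma measurable_expected_uncovered_Suc:
  "expected_uncovered_Suc n \<in> borel_measurable (natfilt M X (enat n))"
proof -
  have "(\<lambda>\<omega>. overlap (uncovered n \<omega>)) \<in> borel_measurable (natfilt M X (enat n))"
    unfolding overlap_def by measurable
  then show ?thesis
    unfolding expected_uncovered_Suc_def[abs_def] by measurable
qed

lemma expected_uncovered_Suc_nonneg: "0 \<le> expected_uncovered_Suc n \<omega>"
  by (simp add: expected_uncovered_Suc_def)

lemma expected_uncovered_Suc_le_1: "expected_uncovered_Suc n \<omega> \<le> 1"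
  using enn2real_mono[OF overlap_uncovered_le_4[of n \<omega>]] by (simp add: expected_uncovered_Suc_def)

lemma expected_uncovered_Suc_le:
  assumes "1/2 \<le> vfrac X \<epsilon> (enat n) \<omega>"
  defines "w \<equiv> 1 - vfrac X \<epsilon> (enat n) \<omega>"
  shows "expected_uncovered_Suc n \<omega> \<le> w * (1 - 1/4 * (1 - w))"
proof -
  have "0 \<le> w * (1 - 1/4 * (1 - w))"
    using assms(1) vfrac_le_1[of X \<epsilon> "enat n" \<omega>] unfolding w_def by (intro mult_nonneg_nonneg) auto
  then have "enn2real (overlap (uncovered n \<omega>)) \<le> 4 * (w * (1 - 1/4 * (1 - w)))"
    using overlap_uncovered_le_quadratic[OF assms(1)] unfolding w_def by (intro enn2real_leI) auto
  then show ?thesis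
    by (simp add: expected_uncovered_Suc_def)
qed

lemma wfrac_nonneg: "0 \<le> wfrac X \<epsilon> t \<omega>" and wfrac_le_1: "wfrac X \<epsilon> t \<omega> \<le> 1"
  unfolding wfrac_def using vfrac_le_1 vfrac_nonneg by auto

lemma measurable_wfrac: "wfrac X \<epsilon> t \<in> borel_measurable M"
proof -
  let ?T = "\<lambda>\<omega>. tau1 X \<epsilon> \<omega> + enat t"
  have "Measurable.pred (natfilt M X a) (\<lambda>\<omega>. ?T \<omega> = a)" for a
    by (intro filtration.stopping_time_eq_const[OF filtration_natfilt]
        stopping_time_plus_enat[OF filtration_natfilt stopping_time_tau1])
  then have "{\<omega> \<in> space M. ?T \<omega> = a} \<in> sets M" for a
    using natfilt_subalgebra[of a] by (auto simp: pred_def subalgebra_def)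
  then have T: "?T \<in> M \<rightarrow>\<^sub>M count_space UNIV"
    unfolding measurable_count_space_eq2_countable by (auto simp: vimage_def Int_def conj_commute)
  show ?thesis
    unfolding wfrac_def[abs_def]
  proof (rule measurable_compose_countable'[where f="\<lambda>k \<omega>. 1 - vfrac X \<epsilon> k \<omega>" and I=UNIV])
    show "(\<lambda>\<omega>. 1 - vfrac X \<epsilon> k \<omega>) \<in> borel_measurable M" for k
      using measurable_from_subalg[OF natfilt_subalgebra measurable_vfrac] by measurable
  qed (use T in simp_all)
qed

lemma nn_set_integral_wfrac_Suc:
  assumes B: "B \<in> sets (natfilt M X (enat n))" "B \<subseteq> {\<omega>. tau1 X \<epsilon> \<omega> + enat t = enat n}"
  shows "(\<integral>\<^sup>+\<omega>\<in>B. ennreal (wfrac X \<epsilon> (Suc t) \<omega>) \<partial>M) =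
    (\<integral>\<^sup>+\<omega>\<in>B. ennreal (expected_uncovered_Suc n \<omega>) \<partial>M)"
proof -
  have "wfrac X \<epsilon> (Suc t) \<omega> = 1 - vfrac X \<epsilon> (enat (Suc n)) \<omega>" if "\<omega> \<in> B" for \<omega>
    using B(2) that by (cases "tau1 X \<epsilon> \<omega>") (auto simp: wfrac_def)
  then have "(\<integral>\<^sup>+\<omega>\<in>B. ennreal (wfrac X \<epsilon> (Suc t) \<omega>) \<partial>M) =
      (\<integral>\<^sup>+\<omega>\<in>B. ennreal (1 - vfrac X \<epsilon> (enat (Suc n)) \<omega>) \<partial>M)"
    by (intro nn_integral_cong) (auto simp: indicator_def)
  also have "\<dots> = (\<integral>\<^sup>+\<omega>\<in>B. overlap (uncovered n \<omega>) \<partial>M) / 4"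
    by (rule nn_integral_uncovered_Suc[OF B(1)])
  also have "\<dots> = (\<integral>\<^sup>+\<omega>\<in>B. ennreal (expected_uncovered_Suc n \<omega>) \<partial>M)"
    using B(1) natfilt_subalgebra
    by (subst nn_integral_divide[symmetric])
       (auto simp: ennreal_expected_uncovered_Suc divide_ennreal_def mult_ac subalgebra_def overlap_def)
  finally show ?thesis .
qed

lemma expected_uncovered_Suc_at_le:
  "(case tau1 X \<epsilon> \<omega> + enat t of enat n \<Rightarrow> expected_uncovered_Suc n \<omega> | \<infinity> \<Rightarrow> 0)
    \<le> wfrac X \<epsilon> t \<omega> * (1 - (1/4) * (1 - wfrac X \<epsilon> t \<omega>))"
proof (cases "tau1 X \<epsilon> \<omega> + enat t")
  case (enat n)
  then obtain m where m: "tau1 X \<epsilon> \<omega> = enat m" "m \<le> n"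
    by (cases "tau1 X \<epsilon> \<omega>") auto
  have "1/2 \<le> vfrac X \<epsilon> (enat n) \<omega>"
    using vfrac_tau1[OF m(1)] vfrac_mono[of "enat m" "enat n" X \<epsilon> \<omega>] m(2) by simp
  then show ?thesis
    using expected_uncovered_Suc_le[of n \<omega>] enat by (simp add: wfrac_def)
next
  case infinity
  then show ?thesis
    using wfrac_nonneg[of t \<omega>] wfrac_le_1[of t \<omega>] by simp
qed

theorem AE_cond_exp_wfrac_Suc_le:
  "AE \<omega> in M.
     real_cond_exp M (filtration.pre_sigma (space M) (natfilt M X) (\<lambda>\<omega>. tau1 X \<epsilon> \<omega> + enat t))
       (wfrac X \<epsilon> (Suc t)) \<omega>
     \<le> wfrac X \<epsilon> t \<omega> * (1 - (1/4) * (1 - wfrac X \<epsilon> t \<omega>))"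
proof -
  have T: "stopping_time (natfilt M X) (\<lambda>\<omega>. tau1 X \<epsilon> \<omega> + enat t)"
    by (rule stopping_time_plus_enat[OF filtration_natfilt stopping_time_tau1])
  have fin: "AE \<omega> in M. tau1 X \<epsilon> \<omega> + enat t \<noteq> \<infinity>"
    using AE_tau1_finite by eventually_elim (simp add: plus_eq_infty_iff_enat)
  have "AE \<omega> in M.
      real_cond_exp M (filtration.pre_sigma (space M) (natfilt M X) (\<lambda>\<omega>. tau1 X \<epsilon> \<omega> + enat t))
        (wfrac X \<epsilon> (Suc t)) \<omega> =
      (case tau1 X \<epsilon> \<omega> + enat t of enat n \<Rightarrow> expected_uncovered_Suc n \<omega> | \<infinity> \<Rightarrow> 0)"
    by (rule real_cond_exp_pre_sigma_enat[OF filtration_natfilt natfilt_subalgebra T fin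
          measurable_wfrac wfrac_nonneg wfrac_le_1 measurable_expected_uncovered_Suc
          expected_uncovered_Suc_nonneg expected_uncovered_Suc_le_1 nn_set_integral_wfrac_Suc])
  then show ?thesis
    by eventually_elim (use expected_uncovered_Suc_at_le in simp)
qed

end

theorem corollary5:
  fixes M :: "'a measure" and X :: "nat \<Rightarrow> 'a \<Rightarrow> real" and \<epsilon> :: real and t :: nat
  assumes "prob_space M"
    and "\<And>i. 1 \<le> i \<Longrightarrow> X i \<in> borel_measurable M"
    and "prob_space.indep_vars M (\<lambda>_. borel) X {1..}"
    and "\<And>i. 1 \<le> i \<Longrightarrow> distr M lborel (X i) = uniform_measure lborel {-1..1}"
    and "\<epsilon> > 0"
  shows "AE \<omega> in M.
     real_cond_exp M
       (filtration.pre_sigma (space M) (natfilt M X) (\<lambda>\<omega>. tau1 X \<epsilon> \<omega> + enat t))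
       (wfrac X \<epsilon> (Suc t)) \<omega>
     \<le> wfrac X \<epsilon> t \<omega> * (1 - (1/4) * (1 - wfrac X \<epsilon> t \<omega>))"
proof -
  interpret uniform_subset_sums M X \<epsilon>
    using assms by (simp add: uniform_subset_sums_def uniform_subset_sums_axioms_def)
  show ?thesis
    by (rule AE_cond_exp_wfrac_Suc_le)
qed

end
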